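(* Let $(X,\rho)$ be a finite metric space, $W\subseteq X$, $T\subseteq X$ nonempty, $z>0$, and let $\mathcal{B}=(\mathcal{B}(1),\ldots,\mathcal{B}(L))$ be a $z$-linear bin division of $W$ with respect to $T$. Let $A\subseteq W$ and $r\in(0,1)$. If $|\mathcal{B}(i)\cap A|/|\mathcal{B}(i)|\le r$ for all $i\in[L]$, then $$R(A\setminus\mathcal{B}(1),T)\le \tfrac32\, r\, R(W,T).$$
   Context: $\rho(x,T):=\min_{y\in T}\rho(x,y)$ and $R(S,T):=\sum_{x\in S}\rho(x,T)$. A $z$-linear bin division of $W$ with respect to $T$ is a partition $\mathcal{B}=(\mathcal{B}(1),\ldots,\mathcal{B}(L))$ of $W$ such that: (1) if $z\le |W|$ then $|\mathcal{B}(i)|\ge z(i+1)/2$ for all $i\in[L]$; otherwise ($|W|<z$) the division is trivial, $\mathcal{B}(1):=W$; (2) $|\mathcal{B}(1)|\le\frac52 z$; (3) $|\mathcal{B}(i+1)|/|\mathcal{B}(i)|\le 3/2$ for $i\in[L-1]$; (4) for $i\in[L-1]$, $x\in\mathcal{B}(i)$, $x'\in\mathcal{B}(i+1)$: $\rho(x,T)\ge\rho(x',T)$. *)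

theory Defs
  imports Complex_Main
begin

definition metric_on :: "'a set \<Rightarrow> ('a \<Rightarrow> 'a \<Rightarrow> real) \<Rightarrow> bool" where
  "metric_on X \<rho> \<longleftrightarrow>
     (\<forall>x\<in>X. \<forall>y\<in>X. \<rho> x y \<ge> 0 \<and> (\<rho> x y = 0 \<longleftrightarrow> x = y) \<and> \<rho> x y = \<rho> y x) \<and>
     (\<forall>x\<in>X. \<forall>y\<in>X. \<forall>w\<in>X. \<rho> x w \<le> \<rho> x y + \<rho> y w)"

definition dist_set :: "('a \<Rightarrow> 'a \<Rightarrow> real) \<Rightarrow> 'a \<Rightarrow> 'a set \<Rightarrow> real" where
  "dist_set \<rho> x T = Min ((\<lambda>y. \<rho> x y) ` T)"

definition cost :: "('a \<Rightarrow> 'a \<Rightarrow> real) \<Rightarrow> 'a set \<Rightarrow> 'a set \<Rightarrow> real" where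
  "cost \<rho> S T = (\<Sum>x\<in>S. dist_set \<rho> x T)"

definition linear_bin_division ::
  "('a \<Rightarrow> 'a \<Rightarrow> real) \<Rightarrow> real \<Rightarrow> 'a set \<Rightarrow> 'a set \<Rightarrow> (nat \<Rightarrow> 'a set) \<Rightarrow> nat \<Rightarrow> bool" where
  "linear_bin_division \<rho> z W T B L \<longleftrightarrow>
     \<comment> \<open>partition of W\<close>
     1 \<le> L \<and> (\<Union>i\<in>{1..L}. B i) = W \<and>
     (\<forall>i\<in>{1..L}. \<forall>j\<in>{1..L}. i \<noteq> j \<longrightarrow> B i \<inter> B j = {}) \<and>
     \<comment> \<open>(1)\<close>
     (if z \<le> real (card W)
      then (\<forall>i\<in>{1..L}. real (card (B i)) \<ge> z * (real i + 1) / 2)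
      else L = 1 \<and> B 1 = W) \<and>
     \<comment> \<open>(2)\<close>
     real (card (B 1)) \<le> 5/2 * z \<and>
     \<comment> \<open>(3)\<close>
     (\<forall>i\<in>{1..<L}. real (card (B (i+1))) / real (card (B i)) \<le> 3/2) \<and>
     \<comment> \<open>(4)\<close>
     (\<forall>i\<in>{1..<L}. \<forall>x\<in>B i. \<forall>x'\<in>B (i+1). dist_set \<rho> x T \<ge> dist_set \<rho> x' T)"

end

theory Submission
  imports Defs "HOL-Library.Disjoint_Sets"
begin

text \<open>Every point of A outside the first bin lies in some bin B(i+1), whose weights are
  dominated by every weight in the previous bin B(i). Since A occupies at most an r-fraction
  of B(i+1) and |B(i+1)| \<le> 3/2 |B(i)|, the weight of A in B(i+1) is at most 3/2 r times the
  weight of B(i); summing over i charges each bin at most once.\<close>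

lemma dist_set_nonneg:
  assumes "metric_on X \<rho>" "x \<in> X" "T \<subseteq> X" "finite T" "T \<noteq> {}"
  shows "dist_set \<rho> x T \<ge> 0"
  using assms unfolding metric_on_def dist_set_def by (auto simp: Min_ge_iff)

lemma card_le_of_card_ratio_le:
  assumes "finite Q" "S \<subseteq> Q" "real (card S) / real (card Q) \<le> r"
  shows "real (card S) \<le> r * real (card Q)"
proof (cases "Q = {}")
  case True
  then show ?thesis using assms(2) by simp
next
  case False
  then show ?thesis using assms by (simp add: divide_le_eq card_gt_0_iff)
qed

lemma sum_sparse_subset_le_heavier_set:
  fixes f :: "'a \<Rightarrow> real"
  assumes "finite P" "finite Q" "S \<subseteq> Q"
    and "\<forall>x\<in>P. f x \<ge> 0" and "\<forall>x\<in>P. \<forall>y\<in>Q. f y \<le> f x"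
    and "real (card S) \<le> r * real (card Q)" and "real (card Q) \<le> c * real (card P)"
    and "0 \<le> r" "0 \<le> c"
  shows "sum f S \<le> c * r * sum f P"
proof (cases "P = {}")
  case True
  then have "S = {}" using assms(2,3,7) by (simp add: finite_subset)
  then show ?thesis using True by simp
next
  case False
  define m where "m = Min (f ` P)"
  have m_le: "m \<le> f x" if "x \<in> P" for x
    using assms(1) that unfolding m_def by simp
  have m_in: "m \<in> f ` P"
    using assms(1) False unfolding m_def by simp
  then have "0 \<le> m" using assms(4) by blast
  have "sum f S \<le> real (card S) * m"
    using sum_bounded_above[of S f m] m_in assms(3,5) by fastforce
  also have "\<dots> \<le> r * (c * real (card P)) * m"
    using assms(6,7,8) \<open>0 \<le> m\<close> by (meson mult_left_mono mult_right_mono order_trans)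
  also have "\<dots> = c * r * (real (card P) * m)" by simp
  also have "\<dots> \<le> c * r * sum f P"
    using sum_bounded_below[of P m f] m_le assms(8,9) by (simp add: mult_left_mono)
  finally show ?thesis .
qed

lemma sum_outside_first_bin_le:
  fixes f :: "'a \<Rightarrow> real" and B :: "nat \<Rightarrow> 'a set"
  assumes "finite W" "(\<Union>i\<in>{1..L}. B i) = W" "disjoint_family_on B {1..L}" "S \<subseteq> W"
    and "\<forall>x\<in>W. f x \<ge> 0"
    and "\<forall>i\<in>{1..<L}. \<forall>x\<in>B i. \<forall>y\<in>B (i+1). f y \<le> f x"
    and "\<forall>i\<in>{1..<L}. real (card (B (i+1))) \<le> c * real (card (B i))"
    and "\<forall>i\<in>{1..L}. real (card (B i \<inter> S)) \<le> r * real (card (B i))"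
    and "0 \<le> r" "0 \<le> c"
  shows "sum f (S - B 1) \<le> c * r * sum f W"
proof -
  have B_sub: "B i \<subseteq> W" if "i \<in> {1..L}" for i
    using assms(2) that by blast
  have B_fin: "finite (B i)" if "i \<in> {1..L}" for i
    using B_sub[OF that] assms(1) by (rule finite_subset)
  have S_split: "S - B 1 = (\<Union>i\<in>{1..<L}. B (i+1) \<inter> S)"
  proof (intro equalityI subsetI)
    fix x assume x: "x \<in> S - B 1"
    then have "x \<in> (\<Union>i\<in>{1..L}. B i)" using assms(2,4) by blast
    then obtain j where j: "j \<in> {1..L}" "x \<in> B j" by blast
    with x have "j \<noteq> 1" by blast
    with j have "j - 1 \<in> {1..<L}" "j - 1 + 1 = j" by auto
    with j x show "x \<in> (\<Union>i\<in>{1..<L}. B (i+1) \<inter> S)" by (metis DiffD1 IntI UN_I)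
  next
    fix x assume "x \<in> (\<Union>i\<in>{1..<L}. B (i+1) \<inter> S)"
    then obtain i where i: "i \<in> {1..<L}" "x \<in> B (i+1)" "x \<in> S" by blast
    then have "B 1 \<inter> B (i+1) = {}" using assms(3) unfolding disjoint_family_on_def by auto
    with i show "x \<in> S - B 1" by blast
  qed
  have "disjoint_family_on (\<lambda>i. B (i+1) \<inter> S) {1..<L}"
    unfolding disjoint_family_on_def
  proof (intro ballI impI)
    fix m n assume "m \<in> {1..<L}" "n \<in> {1..<L}" "m \<noteq> n"
    then have "B (m+1) \<inter> B (n+1) = {}"
      using assms(3) unfolding disjoint_family_on_def by simp
    then show "B (m+1) \<inter> S \<inter> (B (n+1) \<inter> S) = {}" by blast
  qed
  then have "sum f (S - B 1) = (\<Sum>i\<in>{1..<L}. sum f (B (i+1) \<inter> S))"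
    unfolding S_split using B_fin by (subst sum.UNION_disjoint_family) auto
  also have "\<dots> \<le> (\<Sum>i\<in>{1..<L}. c * r * sum f (B i))"
  proof (rule sum_mono)
    fix i assume i: "i \<in> {1..<L}"
    then have bins: "i \<in> {1..L}" "i+1 \<in> {1..L}" by auto
    have "\<forall>x\<in>B i. f x \<ge> 0" using B_sub[OF bins(1)] assms(5) by blast
    moreover have "\<forall>x\<in>B i. \<forall>y\<in>B (i+1). f y \<le> f x" using assms(6) i by blast
    moreover have "real (card (B (i+1) \<inter> S)) \<le> r * real (card (B (i+1)))"
      using assms(8) bins(2) by blast
    moreover have "real (card (B (i+1))) \<le> c * real (card (B i))" using assms(7) i by blast
    ultimately show "sum f (B (i+1) \<inter> S) \<le> c * r * sum f (B i)"
      using sum_sparse_subset_le_heavier_set[OF B_fin[OF bins(1)] B_fin[OF bins(2)] Int_lower1]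
        assms(9,10) by blast
  qed
  also have "\<dots> \<le> (\<Sum>i\<in>{1..L}. c * r * sum f (B i))"
    using B_sub assms(5,9,10) by (intro sum_mono2) (auto intro!: mult_nonneg_nonneg sum_nonneg)
  also have "\<dots> = c * r * sum f W"
    using sum.UNION_disjoint_family[of "{1..L}" B f] B_fin assms(2,3)
    by (simp add: sum_distrib_left)
  finally show ?thesis .
qed

lemma linear_bin_division_partition:
  assumes "linear_bin_division \<rho> z W T B L"
  shows "(\<Union>i\<in>{1..L}. B i) = W" and "disjoint_family_on B {1..L}"
proof -
  note division = assms[unfolded linear_bin_division_def]
  show "(\<Union>i\<in>{1..L}. B i) = W"
    using division by (elim conjE) assumption
  have "\<forall>i\<in>{1..L}. \<forall>j\<in>{1..L}. i \<noteq> j \<longrightarrow> B i \<inter> B j = {}"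
    using division by (elim conjE) assumption
  then show "disjoint_family_on B {1..L}"
    unfolding disjoint_family_on_def by blast
qed

lemma linear_bin_division_card_pos:
  assumes "linear_bin_division \<rho> z W T B L" "0 < z" "2 \<le> L" "i \<in> {1..L}"
  shows "0 < card (B i)"
proof -
  have "z \<le> real (card W)"
    using assms(1,3) unfolding linear_bin_division_def by (auto split: if_splits)
  then have "z * (real i + 1) / 2 \<le> real (card (B i))"
    using assms(1,4) unfolding linear_bin_division_def by auto
  moreover have "0 < z * (real i + 1) / 2" using assms(2) by simp
  ultimately show ?thesis by linarith
qed

lemma linear_bin_division_growth:
  assumes "linear_bin_division \<rho> z W T B L" "0 < z"
  shows "\<forall>i\<in>{1..<L}. real (card (B (i+1))) \<le> 3/2 * real (card (B i))"
proof
  fix i assume i: "i \<in> {1..<L}"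
  have "\<forall>i\<in>{1..<L}. real (card (B (i+1))) / real (card (B i)) \<le> 3/2"
    using assms(1)[unfolded linear_bin_division_def] by (elim conjE) assumption
  moreover have "0 < card (B i)" using linear_bin_division_card_pos[OF assms] i by auto
  ultimately show "real (card (B (i+1))) \<le> 3/2 * real (card (B i))"
    using i by (simp add: divide_le_eq)
qed

theorem lemma6:
  fixes X W T A :: "'a set" and \<rho> :: "'a \<Rightarrow> 'a \<Rightarrow> real"
    and z r :: real and B :: "nat \<Rightarrow> 'a set" and L :: nat
  assumes "finite X" and "metric_on X \<rho>"
    and "W \<subseteq> X" and "T \<subseteq> X" and "T \<noteq> {}"
    and "z > 0"
    and "linear_bin_division \<rho> z W T B L"
    and "A \<subseteq> W"
    and "0 < r" and "r < 1"
    and "\<forall>i\<in>{1..L}. real (card (B i \<inter> A)) / real (card (B i)) \<le> r"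
  shows "cost \<rho> (A - B 1) T \<le> 3/2 * r * cost \<rho> W T"
proof -
  note partition = linear_bin_division_partition[OF assms(7)]
  have monotone: "\<forall>i\<in>{1..<L}. \<forall>x\<in>B i. \<forall>y\<in>B (i+1). dist_set \<rho> y T \<le> dist_set \<rho> x T"
    using assms(7)[unfolded linear_bin_division_def] by (elim conjE) assumption
  have "finite W" "finite T"
    using finite_subset[OF assms(3,1)] finite_subset[OF assms(4,1)] .
  have "finite (B i)" if "i \<in> {1..L}" for i
    using partition(1) that \<open>finite W\<close> by (blast intro: finite_subset)
  then have density: "\<forall>i\<in>{1..L}. real (card (B i \<inter> A)) \<le> r * real (card (B i))"
    using assms(11) card_le_of_card_ratio_le[of "B _" "B _ \<inter> A"] by blast
  have "\<forall>x\<in>W. dist_set \<rho> x T \<ge> 0"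
    using dist_set_nonneg[OF assms(2) _ assms(4) \<open>finite T\<close> assms(5)] assms(3) by blast
  then show ?thesis
    using sum_outside_first_bin_le[OF \<open>finite W\<close> partition assms(8) _ monotone
        linear_bin_division_growth[OF assms(7,6)] density]
      assms(9) unfolding cost_def by simp
qed

end
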